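(* Let $b>0$ and let $f:\mathbb{R}\to\mathbb{R}$ be any function. Suppose $g_1,g_2:\mathbb{R}\to\mathbb{R}$ are measurable functions such that for every $q\in\mathbb{R}$, with $Z\sim\operatorname{Lap}(0,b)$, the expectations $\mathbb{E}[g_1(q+Z)]$ and $\mathbb{E}[g_2(q+Z)]$ exist (are finite) and $\mathbb{E}[g_1(q+Z)]=\mathbb{E}[g_2(q+Z)]=f(q)$. Then $g_1=g_2$ almost everywhere (with respect to Lebesgue measure).
   Context: $\operatorname{Lap}(0,b)$ denotes the Laplace distribution with density $\frac{1}{2b}e^{-|x|/b}$ on $\mathbb{R}$. *)

theory Defs
  imports "HOL-Analysis.Analysis"
begin

definition laplace_density :: "real \<Rightarrow> real \<Rightarrow> real" where
  "laplace_density b x = exp (- \<bar>x\<bar> / b) / (2 * b)"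

definition laplace_measure :: "real \<Rightarrow> real measure" where
  "laplace_measure b = density lebesgue (\<lambda>x. ennreal (laplace_density b x))"

end

theory Submission
  imports Defs
begin

(* Put k = g1 - g2. Every translate of the kernel exp (-|x|/b) integrates k to 0. Splitting
   the kernel at q gives exp (-q/b) L(q) + exp (q/b) U(q) = 0, where L(q) is the integral of
   exp (x/b) k over x <= q and U(q) that of exp (-x/b) k over x > q. For s < t, integrating k
   against the weight exp (x/b) - exp (2s/b) exp (-x/b) over (s, t] expresses
   (exp (2t/b) - exp (2s/b)) U(t) through the increments of L and U; as the weight lies between
   0 and (exp (2t/b) - exp (2s/b)) exp (-x/b), this gives |U(t)| <= the integral of
   exp (-x/b) |k| over (s, t], which tends to 0 as s -> t. Hence exp (-x/b) k integrates to 0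
   over every ray (c, oo), and a function whose ray integrals all vanish is 0 a.e., since the
   densities of its positive and negative parts then agree on all rays. *)

lemma integrable_indicator_times:
  fixes f :: "'a \<Rightarrow> real"
  shows "A \<in> sets M \<Longrightarrow> integrable M f \<Longrightarrow> integrable M (\<lambda>x. indicator A x * f x)"
  using integrable_mult_indicator[of A M f] by simp

lemma integrable_indicator_mult_subset:
  fixes f :: "'a \<Rightarrow> real"
  assumes "integrable M (\<lambda>x. indicator B x * f x)" "A \<in> sets M" "A \<subseteq> B"
  shows "integrable M (\<lambda>x. indicator A x * f x)"
proof -
  have eq: "indicator A x * f x = indicator A x * (indicator B x * f x)" for x
    using assms(3) by (auto simp: indicator_def)
  show ?thesis
    unfolding eq using assms(2,1) by (rule integrable_indicator_times)
qed

lemma integral_Ioc_shrinking_tendsto_0: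
  fixes f :: "real \<Rightarrow> real"
  assumes f: "integrable lebesgue (\<lambda>x. indicator {t - 1<..} x * f x)"
  shows "(\<lambda>n. \<integral>x. indicator {t - 1 / Suc n<..t} x * f x \<partial>lebesgue) \<longlonglongrightarrow> 0"
proof -
  define I where "I n = {t - 1 / Suc n<..t}" for n :: nat
  have I_sub: "I n \<subseteq> {t - 1<..}" for n
  proof
    fix x assume "x \<in> I n"
    moreover have "1 / real (Suc n) \<le> 1" by (simp add: divide_le_eq)
    ultimately show "x \<in> {t - 1<..}"
      unfolding I_def by (simp only: greaterThanAtMost_iff greaterThan_iff) linarith
  qed
  have restrict: "indicator (I n) x * f x = indicator (I n) x * (indicator {t - 1<..} x * f x)"
    for n x
    using I_sub[of n] by (auto simp: indicator_def)
  have "(\<lambda>n. \<integral>x. indicator (I n) x * f x \<partial>lebesgue)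
      \<longlonglongrightarrow> (\<integral>x. 0 \<partial>(lebesgue :: real measure))"
  proof (rule integral_dominated_convergence
      [where w="\<lambda>x. \<bar>indicator {t - 1<..} x * f x\<bar>"])
    show "integrable lebesgue (\<lambda>x. \<bar>indicator {t - 1<..} x * f x\<bar>)"
      using f by (rule integrable_abs)
    show "(\<lambda>x. indicator (I n) x * f x) \<in> borel_measurable lebesgue" for n
      using integrable_indicator_mult_subset[OF f _ I_sub]
      by (simp add: I_def borel_measurable_integrable)
    show "AE x in lebesgue. norm (indicator (I n) x * f x) \<le> \<bar>indicator {t - 1<..} x * f x\<bar>"
      for n
      unfolding restrict[of n] by (intro AE_I2) (auto simp: indicator_def abs_mult)
    show "AE x in lebesgue. (\<lambda>n. indicator (I n) x * f x) \<longlonglongrightarrow> 0"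
      using AE_completion[OF AE_lborel_singleton[of t]]
    proof eventually_elim
      fix x :: real assume "x \<noteq> t"
      have "\<forall>\<^sub>F n in sequentially. x \<notin> I n"
      proof (cases "x < t")
        case True
        then obtain N where N: "inverse (Suc N) < t - x"
          using reals_Archimedean[of "t - x"] by auto
        have "x \<notin> I n" if "N \<le> n" for n
        proof -
          have "1 / real (Suc n) \<le> inverse (Suc N)" using that by (simp add: divide_simps)
          then show ?thesis using N by (simp add: I_def)
        qed
        then show ?thesis unfolding eventually_sequentially by auto
      qed (use \<open>x \<noteq> t\<close> in \<open>auto simp: I_def\<close>)
      then show "(\<lambda>n. indicator (I n) x * f x) \<longlonglongrightarrow> 0"
        by (rule tendsto_eventually[OF eventually_mono]) auto
    qed
  qed simp
  then show ?thesis by (simp add: I_def)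
qed

lemma emeasure_density_eq_integral:
  fixes g :: "'a \<Rightarrow> real"
  assumes g: "integrable M g" "\<And>x. 0 \<le> g x" and A: "A \<in> sets M"
  shows "emeasure (density M g) A = ennreal (\<integral>x. indicator A x * g x \<partial>M)"
proof -
  have [measurable]: "g \<in> borel_measurable M"
    using g by auto
  have "emeasure (density M g) A = (\<integral>\<^sup>+x. ennreal (indicator A x * g x) \<partial>M)"
    using A by (subst emeasure_density) (auto intro!: nn_integral_cong simp: indicator_def)
  also have "\<dots> = ennreal (\<integral>x. indicator A x * g x \<partial>M)"
    using integrable_indicator_times[OF A g(1)] g(2) by (intro nn_integral_eq_integral) auto
  finally show ?thesis .
qed

lemma AE_zero_if_integral_Ioi_zero_lborel:
  fixes \<phi> :: "real \<Rightarrow> real"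
  assumes \<phi>: "integrable lborel \<phi>"
    and zero: "\<And>a. (\<integral>x. indicator {a<..} x * \<phi> x \<partial>lborel) = 0"
  shows "AE x in lborel. \<phi> x = 0"
proof -
  define P where "P x = max (\<phi> x) 0" for x
  define N where "N x = max (- \<phi> x) 0" for x
  have P: "integrable lborel P" and N: "integrable lborel N"
    using \<phi> unfolding P_def[abs_def] N_def[abs_def] by auto
  have [measurable]: "P \<in> borel_measurable borel" "N \<in> borel_measurable borel"
    using P N by auto
  have P_Ioi: "emeasure (density lborel P) {a<..}
      = ennreal (\<integral>x. indicator {a<..} x * P x \<partial>lborel)"
    and N_Ioi: "emeasure (density lborel N) {a<..}
      = ennreal (\<integral>x. indicator {a<..} x * N x \<partial>lborel)"
    for a
    by (intro emeasure_density_eq_integral P N; simp add: P_def N_def)+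
  have "density lborel P = density lborel N"
  proof (rule measure_eqI_lessThan)
    show "emeasure (density lborel P) {a<..} < \<infinity>" for a
      by (simp add: P_Ioi)
    show "emeasure (density lborel P) {a<..} = emeasure (density lborel N) {a<..}" for a
    proof -
      have "(\<integral>x. indicator {a<..} x * P x \<partial>lborel) - (\<integral>x. indicator {a<..} x * N x \<partial>lborel)
          = (\<integral>x. indicator {a<..} x * P x - indicator {a<..} x * N x \<partial>lborel)"
        using integrable_indicator_times[OF _ P] integrable_indicator_times[OF _ N]
        by (intro Bochner_Integration.integral_diff[symmetric]) auto
      also have "\<dots> = (\<integral>x. indicator {a<..} x * \<phi> x \<partial>lborel)"
        by (intro Bochner_Integration.integral_cong) (auto simp: P_def N_def indicator_def max_def)
      finally show ?thesis
        using zero[of a] by (simp add: P_Ioi N_Ioi)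
    qed
  qed simp_all
  then have "AE x in lborel. ennreal (P x) = ennreal (N x)"
    by (intro sigma_finite_measure.density_unique[OF sigma_finite_lborel]) auto
  then show ?thesis
    by eventually_elim (auto simp: P_def N_def max_def split: if_splits)
qed

lemma AE_zero_if_integral_Ioi_zero:
  fixes \<phi> :: "real \<Rightarrow> real"
  assumes \<phi>: "\<And>c. integrable lebesgue (\<lambda>x. indicator {c<..} x * \<phi> x)"
    and zero: "\<And>c. (\<integral>x. indicator {c<..} x * \<phi> x \<partial>lebesgue) = 0"
  shows "AE x in lebesgue. \<phi> x = 0"
proof -
  have ray: "AE x in lebesgue. x > c \<longrightarrow> \<phi> x = 0" for c
  proof -
    let ?\<psi> = "\<lambda>x. indicator {c<..} x * \<phi> x"
    obtain \<psi> where \<psi>[measurable]: "\<psi> \<in> borel_measurable lborel"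
      and ae: "AE x in lborel. ?\<psi> x = \<psi> x"
      using completion_ex_borel_measurable_real[of ?\<psi> lborel] \<phi>[of c] by auto
    have ae': "AE x in lebesgue. ?\<psi> x = \<psi> x"
      using ae by (rule AE_completion)
    have "integrable lebesgue \<psi>"
      using \<phi>[of c] measurable_completion[OF \<psi>] ae' by (rule integrable_cong_AE_imp)
    then have "integrable lborel \<psi>"
      by (simp add: integrable_completion)
    then have "AE x in lborel. \<psi> x = 0"
    proof (rule AE_zero_if_integral_Ioi_zero_lborel)
      fix a
      have "(\<integral>x. indicator {a<..} x * \<psi> x \<partial>lborel)
          = (\<integral>x. indicator {a<..} x * \<psi> x \<partial>lebesgue)"
        by (simp add: integral_completion)
      also have "\<dots> = (\<integral>x. indicator {max a c<..} x * \<phi> x \<partial>lebesgue)"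
        using ae' borel_measurable_integrable[OF \<phi>[of "max a c"]]
        by (intro integral_cong_AE)
          (auto simp: measurable_completion indicator_def elim!: eventually_mono)
      also have "\<dots> = 0" by (rule zero)
      finally show "(\<integral>x. indicator {a<..} x * \<psi> x \<partial>lborel) = 0" .
    qed
    with ae have "AE x in lborel. ?\<psi> x = 0"
      by eventually_elim simp
    then show ?thesis
      by (rule AE_completion[THEN eventually_mono]) (simp add: indicator_def split: if_splits)
  qed
  have "AE x in lebesgue. \<forall>n::nat. x > - real n \<longrightarrow> \<phi> x = 0"
    unfolding AE_all_countable by (intro allI ray)
  then show ?thesis
    by eventually_elim (meson reals_Archimedean2 minus_less_iff)
qed

lemma exp_weight_bounds:
  fixes b s x t :: real
  assumes "b > 0" and "x \<in> {s<..t}"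
  shows "0 \<le> exp (x / b) - exp (2 * s / b) * exp (- x / b)"
    and "exp (x / b) - exp (2 * s / b) * exp (- x / b)
      \<le> (exp (2 * t / b) - exp (2 * s / b)) * exp (- x / b)"
proof -
  have eq: "exp (x / b) - exp (2 * s / b) * exp (- x / b)
      = exp (- x / b) * (exp (2 * x / b) - exp (2 * s / b))"
    by (simp add: algebra_simps mult_exp_exp)
  have "exp (2 * s / b) \<le> exp (2 * x / b)" "exp (2 * x / b) \<le> exp (2 * t / b)"
    using assms by (simp_all add: divide_right_mono)
  then show "0 \<le> exp (x / b) - exp (2 * s / b) * exp (- x / b)"
    "exp (x / b) - exp (2 * s / b) * exp (- x / b)
      \<le> (exp (2 * t / b) - exp (2 * s / b)) * exp (- x / b)"
    unfolding eq by (simp_all add: mult_left_mono mult.commute)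
qed

context
  fixes b :: real and k :: "real \<Rightarrow> real"
  assumes kernel_integrable: "\<And>q. integrable lebesgue (\<lambda>x. exp (- \<bar>x - q\<bar> / b) * k x)"
begin

(* Stop simp from rewriting - x / b to - (x / b), which would detach the tail integrands from
   the lemmas stated about them. *)
declare divide_minus_left [simp del]

definition lower_tail :: "real \<Rightarrow> real" where
  "lower_tail q = (\<integral>x. indicator {..q} x * (exp (x / b) * k x) \<partial>lebesgue)"

definition upper_tail :: "real \<Rightarrow> real" where
  "upper_tail q = (\<integral>x. indicator {q<..} x * (exp (- x / b) * k x) \<partial>lebesgue)"

lemma integrable_lower_tail: "integrable lebesgue (\<lambda>x. indicator {..q} x * (exp (x / b) * k x))"
proof -
  have eq: "indicator {..q} x * (exp (x / b) * k x) =
      exp (q / b) * (indicator {..q} x * (exp (- \<bar>x - q\<bar> / b) * k x))" for x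
    by (cases "x \<le> q") (simp_all add: mult_exp_exp diff_divide_distrib)
  show ?thesis
    unfolding eq
    by (intro integrable_mult_right integrable_indicator_times[OF _ kernel_integrable]) simp
qed

lemma integrable_upper_tail: "integrable lebesgue (\<lambda>x. indicator {q<..} x * (exp (- x / b) * k x))"
proof -
  have eq: "indicator {q<..} x * (exp (- x / b) * k x) =
      exp (- q / b) * (indicator {q<..} x * (exp (- \<bar>x - q\<bar> / b) * k x))" for x
    by (cases "q < x") (simp_all add: mult_exp_exp diff_divide_distrib)
  show ?thesis
    unfolding eq
    by (intro integrable_mult_right integrable_indicator_times[OF _ kernel_integrable]) simp
qed

lemma integrable_upper_increment:
  "integrable lebesgue (\<lambda>x. indicator {s<..t} x * (exp (- x / b) * k x))"
  by (rule integrable_indicator_mult_subset[OF integrable_upper_tail]) auto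

lemma integrable_lower_increment:
  "integrable lebesgue (\<lambda>x. indicator {s<..t} x * (exp (x / b) * k x))"
  by (rule integrable_indicator_mult_subset[OF integrable_lower_tail]) auto

lemma upper_tail_diff:
  assumes "s \<le> t"
  shows "upper_tail s - upper_tail t = (\<integral>x. indicator {s<..t} x * (exp (- x / b) * k x) \<partial>lebesgue)"
proof -
  have eq: "indicator {s<..} x * (exp (- x / b) * k x) = indicator {s<..t} x * (exp (- x / b) * k x)
      + indicator {t<..} x * (exp (- x / b) * k x)" for x
    using assms by (auto simp: indicator_def)
  show ?thesis
    unfolding upper_tail_def eq by (simp add: integrable_upper_increment integrable_upper_tail)
qed

lemma lower_tail_diff:
  assumes "s \<le> t"
  shows "lower_tail t - lower_tail s = (\<integral>x. indicator {s<..t} x * (exp (x / b) * k x) \<partial>lebesgue)"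
proof -
  have eq: "indicator {..t} x * (exp (x / b) * k x) = indicator {..s} x * (exp (x / b) * k x)
      + indicator {s<..t} x * (exp (x / b) * k x)" for x
    using assms by (auto simp: indicator_def)
  show ?thesis
    unfolding lower_tail_def eq by (simp add: integrable_lower_increment integrable_lower_tail)
qed

lemma integrable_weighted_increment:
  "integrable lebesgue
    (\<lambda>x. indicator {s<..t} x * ((exp (x / b) - exp (2 * s / b) * exp (- x / b)) * k x))"
proof -
  have eq: "indicator {s<..t} x * ((exp (x / b) - exp (2 * s / b) * exp (- x / b)) * k x)
      = indicator {s<..t} x * (exp (x / b) * k x)
        - exp (2 * s / b) * (indicator {s<..t} x * (exp (- x / b) * k x))" for x
    by (simp add: algebra_simps)
  show ?thesis
    unfolding eq
    by (intro Bochner_Integration.integrable_diff integrable_mult_right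
        integrable_lower_increment integrable_upper_increment)
qed

context
  assumes b: "b > 0"
    and kernel_integral: "\<And>q. (\<integral>x. exp (- \<bar>x - q\<bar> / b) * k x \<partial>lebesgue) = 0"
begin

lemma tails_balance: "exp (- q / b) * lower_tail q + exp (q / b) * upper_tail q = 0"
proof -
  have eq: "exp (- \<bar>x - q\<bar> / b) * k x = exp (- q / b) * (indicator {..q} x * (exp (x / b) * k x))
      + exp (q / b) * (indicator {q<..} x * (exp (- x / b) * k x))" for x
    by (cases "x \<le> q") (simp_all add: mult_exp_exp diff_divide_distrib)
  have "0 = (\<integral>x. exp (- \<bar>x - q\<bar> / b) * k x \<partial>lebesgue)"
    by (rule kernel_integral[symmetric])
  also have "\<dots> = exp (- q / b) * lower_tail q + exp (q / b) * upper_tail q"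
    unfolding eq lower_tail_def upper_tail_def
    by (simp add: integrable_lower_tail integrable_upper_tail)
  finally show ?thesis ..
qed

lemma lower_tail_eq: "lower_tail q = - exp (2 * q / b) * upper_tail q"
proof -
  have "exp (q / b) * (exp (- q / b) * lower_tail q + exp (q / b) * upper_tail q) = 0"
    by (simp add: tails_balance)
  then show ?thesis
    by (simp add: distrib_left mult.assoc[symmetric] mult_exp_exp add_eq_0_iff)
qed

lemma weighted_increment:
  assumes "s \<le> t"
  shows "(\<integral>x. indicator {s<..t} x * ((exp (x / b) - exp (2 * s / b) * exp (- x / b)) * k x) \<partial>lebesgue)
    = (exp (2 * s / b) - exp (2 * t / b)) * upper_tail t"
proof -
  have "(\<integral>x. indicator {s<..t} x * ((exp (x / b) - exp (2 * s / b) * exp (- x / b)) * k x) \<partial>lebesgue)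
      = (\<integral>x. indicator {s<..t} x * (exp (x / b) * k x)
          - exp (2 * s / b) * (indicator {s<..t} x * (exp (- x / b) * k x)) \<partial>lebesgue)"
    by (simp add: algebra_simps)
  also have "\<dots> = (lower_tail t - lower_tail s) - exp (2 * s / b) * (upper_tail s - upper_tail t)"
    using integrable_lower_increment integrable_upper_increment
    by (simp add: lower_tail_diff[OF assms] upper_tail_diff[OF assms])
  also have "\<dots> = (exp (2 * s / b) - exp (2 * t / b)) * upper_tail t"
    by (simp add: lower_tail_eq algebra_simps)
  finally show ?thesis .
qed

lemma upper_tail_bound:
  assumes "s < t"
  shows "\<bar>upper_tail t\<bar> \<le> (\<integral>x. indicator {s<..t} x * (exp (- x / b) * \<bar>k x\<bar>) \<partial>lebesgue)"
proof -
  define E where "E = exp (2 * t / b) - exp (2 * s / b)"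
  have E: "E > 0"
    using assms b by (simp add: E_def divide_strict_right_mono)
  note weight = exp_weight_bounds[OF b, where s=s and t=t, folded E_def]
  have "E * \<bar>upper_tail t\<bar>
      = \<bar>\<integral>x. indicator {s<..t} x * ((exp (x / b) - exp (2 * s / b) * exp (- x / b)) * k x) \<partial>lebesgue\<bar>"
    using E assms by (simp add: weighted_increment abs_mult E_def)
  also have "\<dots> \<le> (\<integral>x. E * (indicator {s<..t} x * (exp (- x / b) * \<bar>k x\<bar>)) \<partial>lebesgue)"
  proof (rule integral_abs_bound_integral)
    show "integrable lebesgue (\<lambda>x. indicator {s<..t} x * ((exp (x / b) - exp (2 * s / b) * exp (- x / b)) * k x))"
      by (rule integrable_weighted_increment)
    show "integrable lebesgue (\<lambda>x. E * (indicator {s<..t} x * (exp (- x / b) * \<bar>k x\<bar>)))"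
      using integrable_abs[OF integrable_upper_increment] by (simp add: abs_mult)
    show "\<bar>indicator {s<..t} x * ((exp (x / b) - exp (2 * s / b) * exp (- x / b)) * k x)\<bar>
        \<le> E * (indicator {s<..t} x * (exp (- x / b) * \<bar>k x\<bar>))" for x
    proof (cases "x \<in> {s<..t}")
      case True
      then have "(exp (x / b) - exp (2 * s / b) * exp (- x / b)) * \<bar>k x\<bar> \<le> E * exp (- x / b) * \<bar>k x\<bar>"
        by (intro mult_right_mono weight) auto
      with weight(1)[OF True] True show ?thesis
        by (simp add: abs_mult mult.assoc)
    qed simp
  qed
  also have "\<dots> = E * (\<integral>x. indicator {s<..t} x * (exp (- x / b) * \<bar>k x\<bar>) \<partial>lebesgue)"
    by simp
  finally show ?thesis
    using E by simp
qed

lemma upper_tail_eq_0: "upper_tail t = 0"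
proof -
  have "integrable lebesgue (\<lambda>x. indicator {t - 1<..} x * (exp (- x / b) * \<bar>k x\<bar>))"
    using integrable_abs[OF integrable_upper_tail[of "t - 1"]] by (simp add: abs_mult)
  then have "(\<lambda>n. \<integral>x. indicator {t - 1 / Suc n<..t} x * (exp (- x / b) * \<bar>k x\<bar>) \<partial>lebesgue) \<longlonglongrightarrow> 0"
    by (rule integral_Ioc_shrinking_tendsto_0)
  then have "\<bar>upper_tail t\<bar> \<le> 0"
    by (rule LIMSEQ_le_const) (auto intro!: upper_tail_bound)
  then show ?thesis
    by simp
qed

lemma AE_zero_if_exp_kernel_integrals_zero: "AE x in lebesgue. k x = 0"
proof -
  have "AE x in lebesgue. exp (- x / b) * k x = 0"
    using integrable_upper_tail upper_tail_eq_0
    by (intro AE_zero_if_integral_Ioi_zero) (auto simp: upper_tail_def)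
  then show ?thesis
    by eventually_elim simp
qed

end

end

lemma laplace_density_nonneg: "b > 0 \<Longrightarrow> 0 \<le> laplace_density b x"
  by (simp add: laplace_density_def)

lemma borel_measurable_laplace_density [measurable]: "laplace_density b \<in> borel_measurable lebesgue"
proof -
  have "laplace_density b \<in> borel_measurable borel"
    unfolding laplace_density_def[abs_def] by measurable
  then show ?thesis
    by (simp add: measurable_completion)
qed

lemma laplace_density_shift: "laplace_density b (x - q) = inverse (2 * b) * exp (- \<bar>x - q\<bar> / b)"
  unfolding laplace_density_def by (simp add: field_simps)

lemma borel_measurable_shift:
  fixes g :: "real \<Rightarrow> real"
  shows "g \<in> borel_measurable lebesgue \<Longrightarrow> (\<lambda>z. g (q + z)) \<in> borel_measurable lebesgue"
  using borel_measurable_affine[of g 1 q] by simp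

context
  fixes b q :: real and g :: "real \<Rightarrow> real"
  assumes b: "b > 0" and g [measurable]: "g \<in> borel_measurable lebesgue"
begin

lemma integrable_laplace_measure_shift_iff:
  "integrable (laplace_measure b) (\<lambda>z. g (q + z)) \<longleftrightarrow>
    integrable lebesgue (\<lambda>x. exp (- \<bar>x - q\<bar> / b) * g x)"
proof -
  have "integrable (laplace_measure b) (\<lambda>z. g (q + z)) \<longleftrightarrow>
      integrable lebesgue (\<lambda>z. laplace_density b z * g (q + z))"
    unfolding laplace_measure_def using borel_measurable_shift[OF g] b
    by (subst integrable_density) (auto simp: laplace_density_nonneg)
  also have "\<dots> \<longleftrightarrow> integrable lebesgue (\<lambda>x. laplace_density b (x - q) * g x)"
    using lebesgue_integrable_real_affine_iff[of 1 "\<lambda>x. laplace_density b (x - q) * g x" q] by simp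
  also have "\<dots> \<longleftrightarrow> integrable lebesgue (\<lambda>x. inverse (2 * b) * (exp (- \<bar>x - q\<bar> / b) * g x))"
    by (simp only: laplace_density_shift mult.assoc)
  also have "\<dots> \<longleftrightarrow> integrable lebesgue (\<lambda>x. exp (- \<bar>x - q\<bar> / b) * g x)"
    using b by (subst integrable_mult_left_iff) simp
  finally show ?thesis .
qed

lemma integral_laplace_measure_shift:
  "(\<integral>z. g (q + z) \<partial>laplace_measure b) = (\<integral>x. exp (- \<bar>x - q\<bar> / b) * g x \<partial>lebesgue) / (2 * b)"
proof -
  have "(\<integral>z. g (q + z) \<partial>laplace_measure b) = (\<integral>z. laplace_density b z * g (q + z) \<partial>lebesgue)"
    unfolding laplace_measure_def using borel_measurable_shift[OF g] b
    by (subst integral_density) (auto simp: laplace_density_nonneg)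
  also have "\<dots> = (\<integral>x. laplace_density b (x - q) * g x \<partial>lebesgue)"
    using lebesgue_integral_real_affine[of 1 "\<lambda>x. laplace_density b (x - q) * g x" q] by simp
  also have "\<dots> = (\<integral>x. exp (- \<bar>x - q\<bar> / b) * g x \<partial>lebesgue) / (2 * b)"
    by (simp only: laplace_density_shift mult.assoc integral_mult_right_zero divide_inverse_commute)
  finally show ?thesis .
qed

end

theorem theorem10:
  fixes b :: real and f g1 g2 :: "real \<Rightarrow> real"
  assumes "b > 0"
    and "g1 \<in> borel_measurable lebesgue" and "g2 \<in> borel_measurable lebesgue"
    and "\<And>q. integrable (laplace_measure b) (\<lambda>z. g1 (q + z))"
    and "\<And>q. integrable (laplace_measure b) (\<lambda>z. g2 (q + z))"
    and "\<And>q. (\<integral>z. g1 (q + z) \<partial>laplace_measure b) = f q"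
    and "\<And>q. (\<integral>z. g2 (q + z) \<partial>laplace_measure b) = f q"
  shows "AE x in lebesgue. g1 x = g2 x"
proof -
  define d where "d x = g1 x - g2 x" for x
  have d: "d \<in> borel_measurable lebesgue"
    using assms(2,3) unfolding d_def by measurable
  have "integrable (laplace_measure b) (\<lambda>z. d (q + z))" for q
    using assms(4,5) unfolding d_def by (rule Bochner_Integration.integrable_diff)
  then have integrable: "integrable lebesgue (\<lambda>x. exp (- \<bar>x - q\<bar> / b) * d x)" for q
    using integrable_laplace_measure_shift_iff[OF assms(1) d] by blast
  have integral: "(\<integral>x. exp (- \<bar>x - q\<bar> / b) * d x \<partial>lebesgue) = 0" for q
  proof -
    have "(\<integral>z. d (q + z) \<partial>laplace_measure b) = 0"
      using assms(4-7) unfolding d_def by (simp add: Bochner_Integration.integral_diff)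
    then show ?thesis
      using integral_laplace_measure_shift[OF assms(1) d, of q] assms(1) by simp
  qed
  have "AE x in lebesgue. d x = 0"
    using integrable assms(1) integral by (rule AE_zero_if_exp_kernel_integrals_zero)
  then show ?thesis
    by eventually_elim (simp add: d_def)
qed

end
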